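(* Let $\mathcal{X}\subseteq\mathbb{R}^d$ be closed convex, $\mathcal{Z}$ a set, $f:\mathcal{X}\times\mathcal{Z}\to\mathbb{R}$ with $f(\cdot,z)$ convex and $L$-Lipschitz for all $z$, and $S=(z_1,\dots,z_n)\in\mathcal{Z}^n$ with $F_S(x)=\frac1n\sum_{i=1}^nf(x,z_i)$. Let $\pi$ be an arbitrary permutation of $[n]$ and consider fixed-permutation SGD with step size constant within each epoch: $x^k_1=x^{k-1}_{n+1}$ and $x^k_{t+1}=\mathsf{Proj}_{\mathcal{X}}(x^k_t-\eta_k\nabla f(x^k_t,z_{\pi(t)}))$ for $t=1,\dots,n$, where $\eta_k>0$. Write $x^k=x^k_1$. Then for every epoch $k$ and every $y\in\mathcal{X}$, $$\eta_k[F_S(x^k)-F_S(y)]\le\frac1{2n}\big[\|x^k-y\|^2-\|x^{k+1}-y\|^2\big]+\frac{\eta_k^2L^2(n+2)}{2}.$$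
   Context: $\|\cdot\|$ is the Euclidean norm and $\mathsf{Proj}_{\mathcal{X}}$ the Euclidean projection; $\nabla f(x,z)$ is a fixed selection of a subgradient of $f(\cdot,z)$ at $x$, assumed to have norm at most $L$ (Lipschitz on an open set containing $\mathcal{X}$). *)

theory Defs
  imports "HOL-Analysis.Analysis"
begin

text \<open>Within-epoch iterates of fixed-permutation projected SGD.
  perm_sgd_inner X g S perm eta x t is x_{t+1} of the epoch started at x_1 = x,
  using step size eta, i.e.
  x_{t+1} = Proj_X (x_t - eta * g(x_t, z_{perm(t)})).\<close>
primrec perm_sgd_inner ::
  "'a::euclidean_space set \<Rightarrow> ('a \<Rightarrow> 'z \<Rightarrow> 'a) \<Rightarrow> (nat \<Rightarrow> 'z) \<Rightarrow> (nat \<Rightarrow> nat)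
    \<Rightarrow> real \<Rightarrow> 'a \<Rightarrow> nat \<Rightarrow> 'a" where
  "perm_sgd_inner X g S perm eta x 0 = x"
| "perm_sgd_inner X g S perm eta x (Suc t) =
     closest_point X (perm_sgd_inner X g S perm eta x t
        - eta *\<^sub>R g (perm_sgd_inner X g S perm eta x t) (S (perm (Suc t))))"

definition emp_risk :: "('a \<Rightarrow> 'z \<Rightarrow> real) \<Rightarrow> (nat \<Rightarrow> 'z) \<Rightarrow> nat \<Rightarrow> 'a \<Rightarrow> real" where
  "emp_risk f S n x = (1 / real n) * (\<Sum>i=1..n. f x (S i))"

end

theory Submission
  imports Defs
begin

text \<open>Since projection onto X is nonexpansive, one projected subgradient step at w_t with
  gradient of f(., z_t) gives the classical descent inequality
  2 eta (f(w_t, z_t) - f(y, z_t)) <= |w_t - y|^2 - |w_{t+1} - y|^2 + eta^2 L^2.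
  Each step moves the iterate by at most eta L, so w_t lies within t eta L of the epoch start x^k,
  and Lipschitz continuity replaces f(w_t, z_t) by f(x^k, z_t) at a cost of 2 eta^2 L^2 t.
  Summing over the epoch telescopes the distances; since pi is a permutation, the left-hand
  side becomes 2 n eta (F_S(x^k) - F_S(y)), and the error terms add up to eta^2 L^2 n^2.
  Convexity of f enters only through the subgradient inequality for g.\<close>

lemma closest_point_dist_le:
  assumes "convex X" "closed X" "y \<in> X"
  shows "dist (closest_point X v) y \<le> dist v y"
  using closest_point_lipschitz[of X v y] closest_point_self[of y X] assms by auto

lemma power2_norm_diff_scaleR:
  fixes a G :: "'a::real_inner"
  shows "(norm (a - c *\<^sub>R G))\<^sup>2 = (norm a)\<^sup>2 - 2 * c * (G \<bullet> a) + c\<^sup>2 * (norm G)\<^sup>2"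
  unfolding power2_norm_eq_inner
  by (simp add: inner_diff_left inner_diff_right inner_commute algebra_simps power2_eq_square)

lemma projected_subgradient_step:
  fixes w y G :: "'a::euclidean_space" and \<phi> :: "'a \<Rightarrow> real"
  assumes "convex X" "closed X" "y \<in> X"
    and subgrad: "\<phi> y \<ge> \<phi> w + G \<bullet> (y - w)" and "norm G \<le> L" and "eta \<ge> 0"
  shows "2 * eta * (\<phi> w - \<phi> y)
           \<le> (norm (w - y))\<^sup>2 - (norm (closest_point X (w - eta *\<^sub>R G) - y))\<^sup>2 + eta\<^sup>2 * L\<^sup>2"
proof -
  have "norm (closest_point X (w - eta *\<^sub>R G) - y) \<le> norm ((w - y) - eta *\<^sub>R G)"
    using closest_point_dist_le[OF assms(1-3), of "w - eta *\<^sub>R G"] by (simp add: dist_norm algebra_simps)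
  then have "(norm (closest_point X (w - eta *\<^sub>R G) - y))\<^sup>2
      \<le> (norm (w - y))\<^sup>2 - 2 * eta * (G \<bullet> (w - y)) + eta\<^sup>2 * (norm G)\<^sup>2"
    by (metis norm_ge_zero power2_norm_diff_scaleR power_mono)
  moreover have "eta\<^sup>2 * (norm G)\<^sup>2 \<le> eta\<^sup>2 * L\<^sup>2"
    using \<open>norm G \<le> L\<close> by (simp add: mult_left_mono power_mono)
  moreover have "eta * (\<phi> w - \<phi> y) \<le> eta * (G \<bullet> (w - y))"
    using subgrad \<open>eta \<ge> 0\<close> by (intro mult_left_mono) (auto simp: inner_diff_right)
  ultimately show ?thesis by linarith
qed

lemma closest_point_step_dist:
  assumes "convex X" "closed X" "w \<in> X"
  shows "dist (closest_point X (w - v)) w \<le> norm v"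
  using closest_point_dist_le[OF assms, of "w - v"] by (simp add: dist_norm)

lemma dist_le_steps:
  fixes w :: "nat \<Rightarrow> 'a::metric_space"
  assumes "\<And>t. t < n \<Longrightarrow> dist (w (Suc t)) (w t) \<le> c" and "t \<le> n"
  shows "dist (w t) (w 0) \<le> real t * c"
  using \<open>t \<le> n\<close>
proof (induction t)
  case (Suc t)
  have "dist (w (Suc t)) (w 0) \<le> dist (w (Suc t)) (w t) + dist (w t) (w 0)"
    by (rule dist_triangle)
  also have "\<dots> \<le> c + real t * c"
    using Suc assms(1)[of t] by force
  finally show ?case by (simp add: algebra_simps)
qed simp

lemma perm_sgd_inner_in_set:
  assumes "closed X" "x \<in> X"
  shows "perm_sgd_inner X g S perm eta x t \<in> X"
  using assms by (cases t) (auto intro: closest_point_in_set)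

lemma emp_risk_permute:
  assumes "bij_betw perm {1..n} {1..n}"
  shows "emp_risk f S n w = (\<Sum>t<n. f w (S (perm (Suc t)))) / real n"
proof -
  have "(\<Sum>i=1..n. f w (S i)) = (\<Sum>j=1..n. f w (S (perm j)))"
    using sum.reindex_bij_betw[OF assms, of "\<lambda>i. f w (S i)"] by simp
  also have "\<dots> = (\<Sum>t<n. f w (S (perm (Suc t))))"
    using sum.atLeast1_atMost_eq[of "\<lambda>j. f w (S (perm j))" n] by simp
  finally show ?thesis by (simp add: emp_risk_def)
qed

lemma sum_odd_lessThan: "(\<Sum>t<n. 2 * real t + 1) = (real n)\<^sup>2"
  by (induction n) (simp_all add: power2_eq_square algebra_simps)

lemma perm_sgd_epoch_bound:
  fixes X U :: "'a::euclidean_space set" and Z :: "'z set"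
    and f :: "'a \<Rightarrow> 'z \<Rightarrow> real" and g :: "'a \<Rightarrow> 'z \<Rightarrow> 'a"
  assumes X_closed: "closed X" and X_convex: "convex X" and XU: "X \<subseteq> U"
    and f_lip: "\<And>z. z \<in> Z \<Longrightarrow> L-lipschitz_on U (\<lambda>w. f w z)"
    and g_subgrad: "\<And>z w v. z \<in> Z \<Longrightarrow> w \<in> U \<Longrightarrow> v \<in> U \<Longrightarrow>
                      f v z \<ge> f w z + g w z \<bullet> (v - w)"
    and g_bound: "\<And>z w. z \<in> Z \<Longrightarrow> w \<in> U \<Longrightarrow> norm (g w z) \<le> L"
    and n_pos: "n \<ge> 1"
    and S_in: "\<And>i. i \<in> {1..n} \<Longrightarrow> S i \<in> Z"
    and perm: "bij_betw perm {1..n} {1..n}"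
    and eta_pos: "eta > 0" and x0: "x0 \<in> X" and y: "y \<in> X"
  shows "eta * (emp_risk f S n x0 - emp_risk f S n y)
           \<le> 1 / (2 * real n) * ((norm (x0 - y))\<^sup>2 - (norm (perm_sgd_inner X g S perm eta x0 n - y))\<^sup>2)
             + eta\<^sup>2 * L\<^sup>2 * (real n + 2) / 2"
proof -
  define w where "w = perm_sgd_inner X g S perm eta x0"
  define z where "z t = S (perm (Suc t))" for t
  have wX: "w t \<in> X" for t
    unfolding w_def using X_closed x0 by (rule perm_sgd_inner_in_set)
  have wU: "w t \<in> U" for t
    using wX XU by blast
  have zZ: "z t \<in> Z" if "t < n" for t
    using that bij_betwE[OF perm] S_in by (simp add: z_def)
  have w_0: "w 0 = x0"
    by (simp add: w_def)
  have w_Suc: "w (Suc t) = closest_point X (w t - eta *\<^sub>R g (w t) (z t))" for t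
    by (simp add: w_def z_def)
  have L_nonneg: "L \<ge> 0"
    using g_bound[OF zZ wU, of 0 0] n_pos by (meson norm_ge_zero order_trans less_le_trans zero_less_one)
  have drift: "dist (w t) x0 \<le> real t * (eta * L)" if "t \<le> n" for t
  proof -
    have "dist (w (Suc s)) (w s) \<le> eta * L" if "s < n" for s
    proof -
      have "dist (w (Suc s)) (w s) \<le> norm (eta *\<^sub>R g (w s) (z s))"
        unfolding w_Suc by (rule closest_point_step_dist[OF X_convex X_closed wX])
      also have "\<dots> \<le> eta * L"
        using g_bound[OF zZ[OF that] wU] eta_pos by (simp add: mult_left_mono)
      finally show ?thesis .
    qed
    then show ?thesis
      using dist_le_steps[of n w "eta * L" t] \<open>t \<le> n\<close> by (simp add: w_0)
  qed
  have step: "2 * eta * (f x0 (z t) - f y (z t))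
      \<le> (norm (w t - y))\<^sup>2 - (norm (w (Suc t) - y))\<^sup>2 + eta\<^sup>2 * L\<^sup>2 * (2 * real t + 1)"
    if "t < n" for t
  proof -
    have "f x0 (z t) - f (w t) (z t) \<le> L * dist x0 (w t)"
      using lipschitz_onD[OF f_lip[OF zZ[OF that]], of x0 "w t"] x0 XU wU
      by (auto simp: dist_real_def)
    also have "\<dots> \<le> L * (real t * (eta * L))"
      using drift[of t] that L_nonneg by (simp add: dist_commute mult_left_mono)
    finally have "2 * eta * (f x0 (z t) - f (w t) (z t)) \<le> 2 * eta * (L * (real t * (eta * L)))"
      using eta_pos by (intro mult_left_mono) auto
    moreover have "2 * eta * (f (w t) (z t) - f y (z t))
        \<le> (norm (w t - y))\<^sup>2 - (norm (w (Suc t) - y))\<^sup>2 + eta\<^sup>2 * L\<^sup>2"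
      unfolding w_Suc
      using projected_subgradient_step[OF X_convex X_closed y g_subgrad[OF zZ[OF that] wU]
          g_bound[OF zZ[OF that] wU]] eta_pos y XU
      by auto
    ultimately show ?thesis by (simp add: algebra_simps power2_eq_square)
  qed
  have "emp_risk f S n x0 - emp_risk f S n y = (\<Sum>t<n. f x0 (z t) - f y (z t)) / real n"
    by (simp add: emp_risk_permute[OF perm] z_def sum_subtractf diff_divide_distrib)
  then have "2 * real n * (eta * (emp_risk f S n x0 - emp_risk f S n y))
      = (\<Sum>t<n. 2 * eta * (f x0 (z t) - f y (z t)))"
    using n_pos by (simp flip: sum_distrib_left)
  also have "\<dots> \<le> (\<Sum>t<n. (norm (w t - y))\<^sup>2 - (norm (w (Suc t) - y))\<^sup>2
                          + eta\<^sup>2 * L\<^sup>2 * (2 * real t + 1))"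
    using step by (intro sum_mono) auto
  also have "\<dots> = (norm (x0 - y))\<^sup>2 - (norm (w n - y))\<^sup>2
                    + eta\<^sup>2 * L\<^sup>2 * (\<Sum>t<n. 2 * real t + 1)"
    using sum_lessThan_telescope'[of "\<lambda>t. (norm (w t - y))\<^sup>2" n] w_0
    by (simp add: sum.distrib flip: sum_distrib_left)
  also have "\<dots> = (norm (x0 - y))\<^sup>2 - (norm (w n - y))\<^sup>2 + eta\<^sup>2 * L\<^sup>2 * (real n)\<^sup>2"
    by (simp only: sum_odd_lessThan)
  also have "\<dots> \<le> (norm (x0 - y))\<^sup>2 - (norm (w n - y))\<^sup>2 + eta\<^sup>2 * L\<^sup>2 * (real n * (real n + 2))"
    by (intro add_left_mono mult_left_mono) (simp_all add: power2_eq_square distrib_left)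
  finally show ?thesis
    using n_pos unfolding w_def by (simp add: field_simps)
qed

theorem lemmaC1:
  fixes X U :: "'a::euclidean_space set" and Z :: "'z set"
    and f :: "'a \<Rightarrow> 'z \<Rightarrow> real" and g :: "'a \<Rightarrow> 'z \<Rightarrow> 'a"
    and L :: real and n :: nat and S :: "nat \<Rightarrow> 'z" and perm :: "nat \<Rightarrow> nat"
    and eta :: "nat \<Rightarrow> real" and x :: "nat \<Rightarrow> 'a"
  assumes X_closed: "closed X" and X_convex: "convex X"
    and U_open: "open U" and XU: "X \<subseteq> U"
    and f_convex: "\<And>z. z \<in> Z \<Longrightarrow> convex_on U (\<lambda>w. f w z)"
    and f_lip: "\<And>z. z \<in> Z \<Longrightarrow> L-lipschitz_on U (\<lambda>w. f w z)"
    and g_subgrad: "\<And>z w v. z \<in> Z \<Longrightarrow> w \<in> U \<Longrightarrow> v \<in> U \<Longrightarrow>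
                      f v z \<ge> f w z + g w z \<bullet> (v - w)"
    and g_bound: "\<And>z w. z \<in> Z \<Longrightarrow> w \<in> U \<Longrightarrow> norm (g w z) \<le> L"
    and n_pos: "n \<ge> 1"
    and S_in: "\<And>i. i \<in> {1..n} \<Longrightarrow> S i \<in> Z"
    and pi_perm: "bij_betw perm {1..n} {1..n}"
    and eta_pos: "\<And>k. k \<ge> 1 \<Longrightarrow> eta k > 0"
    and x1: "x 1 \<in> X"
    and x_epoch: "\<And>k. k \<ge> 1 \<Longrightarrow> x (Suc k) = perm_sgd_inner X g S perm (eta k) (x k) n"
  shows "\<forall>k\<ge>1. \<forall>y\<in>X.
           eta k * (emp_risk f S n (x k) - emp_risk f S n y)
             \<le> 1 / (2 * real n) * ((norm (x k - y))\<^sup>2 - (norm (x (Suc k) - y))\<^sup>2)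
               + (eta k)\<^sup>2 * L\<^sup>2 * (real n + 2) / 2"
proof (intro allI impI ballI)
  fix k :: nat and y :: 'a
  assume k: "k \<ge> 1" and y: "y \<in> X"
  have xX: "x j \<in> X" if "j \<ge> 1" for j
    using that
  proof (induction j rule: dec_induct)
    case (step j)
    then show ?case
      using x_epoch[OF step.hyps(1)] perm_sgd_inner_in_set[OF X_closed] by simp
  qed (rule x1)
  show "eta k * (emp_risk f S n (x k) - emp_risk f S n y)
          \<le> 1 / (2 * real n) * ((norm (x k - y))\<^sup>2 - (norm (x (Suc k) - y))\<^sup>2)
            + (eta k)\<^sup>2 * L\<^sup>2 * (real n + 2) / 2"
    unfolding x_epoch[OF k]
    by (rule perm_sgd_epoch_bound[OF X_closed X_convex XU f_lip g_subgrad g_bound n_pos S_in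
          pi_perm eta_pos[OF k] xX[OF k] y])
qed

end
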